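(* Let $p$ be a prime and $G=C_p\times C_p$. Then there are exactly $2^{p+2}+p+1$ $G$-transfer systems. Moreover, the lattice $\mathrm{Tr}(G)$ (ordered by inclusion of relations) is the disjoint union of three subsets $B$, $M$, $T$ where $B$ and $T$ are each (as subposets) isomorphic to the Boolean lattice $[1]^{p+1}$, $M$ consists of $p+1$ elements, and the covering relations of $\mathrm{Tr}(G)$ are exactly the covering relations internal to $B$, the covering relations internal to $T$, and the following: (i) the $p+1$ elements of $B$ covered by $\max B$ are put in bijection with the elements of $M$, and each element of $M$ covers exactly its corresponding element of $B$; (ii) the $p+1$ elements of $T$ covering $\min T$ are put in bijection with the elements of $M$, and each such element of $T$ covers exactly its corresponding element of $M$; (iii) $\min T$ covers $\max B$.
   Context: For a finite lattice $(P,\le)$, a transfer system on $P$ is a partial order $R$ on $P$ refining $\le$ (i.e. $x\,R\,y\Rightarrow x\le y$) that is closed under restriction: if $x\,R\,z$ and $y\le z$ then $(x\wedge y)\,R\,y$. For a finite group $G$, a $G$-transfer system is a transfer system on the subgroup lattice $\mathrm{Sub}(G)$ that is moreover closed under conjugation (if $H\,R\,K$ then $gHg^{-1}\,R\,gKg^{-1}$ for all $g\in G$). $\mathrm{Tr}(G)$ denotes the set of $G$-transfer systems, partially ordered by $R\le R'$ iff every relation of $R$ is a relation of $R'$; it is a lattice. *)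

theory Defs
  imports "HOL-Algebra.Algebra"
begin

definition Sub :: "('a, 'b) monoid_scheme \<Rightarrow> 'a set set" where
  "Sub G = {H. subgroup H G}"

definition conj_set :: "('a, 'b) monoid_scheme \<Rightarrow> 'a \<Rightarrow> 'a set \<Rightarrow> 'a set" where
  "conj_set G g H = (\<lambda>h. g \<otimes>\<^bsub>G\<^esub> h \<otimes>\<^bsub>G\<^esub> inv\<^bsub>G\<^esub> g) ` H"

definition G_transfer_system :: "('a, 'b) monoid_scheme \<Rightarrow> ('a set \<times> 'a set) set \<Rightarrow> bool" where
  "G_transfer_system G R \<longleftrightarrow>
     \<comment> \<open>R refines inclusion on Sub(G)\<close>
     (\<forall>H K. (H, K) \<in> R \<longrightarrow> H \<in> Sub G \<and> K \<in> Sub G \<and> H \<subseteq> K) \<and>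
     \<comment> \<open>R is a partial order on Sub(G)\<close>
     (\<forall>H \<in> Sub G. (H, H) \<in> R) \<and>
     (\<forall>H K. (H, K) \<in> R \<longrightarrow> (K, H) \<in> R \<longrightarrow> H = K) \<and>
     (\<forall>H K L. (H, K) \<in> R \<longrightarrow> (K, L) \<in> R \<longrightarrow> (H, L) \<in> R) \<and>
     \<comment> \<open>closed under restriction\<close>
     (\<forall>H K L. (H, K) \<in> R \<longrightarrow> L \<in> Sub G \<longrightarrow> L \<subseteq> K \<longrightarrow> (H \<inter> L, L) \<in> R) \<and>
     \<comment> \<open>closed under conjugation\<close>
     (\<forall>H K g. (H, K) \<in> R \<longrightarrow> g \<in> carrier G \<longrightarrow> (conj_set G g H, conj_set G g K) \<in> R)"

definition Tr :: "('a, 'b) monoid_scheme \<Rightarrow> ('a set \<times> 'a set) set set" where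
  "Tr G = {R. G_transfer_system G R}"

definition covers_in :: "'c set set \<Rightarrow> 'c set \<Rightarrow> 'c set \<Rightarrow> bool" where
  "covers_in S x y \<longleftrightarrow> x \<in> S \<and> y \<in> S \<and> x \<subset> y \<and> \<not> (\<exists>z \<in> S. x \<subset> z \<and> z \<subset> y)"

text \<open>S (ordered by inclusion) is isomorphic to the Boolean lattice [1]^(n+1), realised
  as the power set of {0..n}; f is an order isomorphism.\<close>
definition bool_iso :: "nat \<Rightarrow> (nat set \<Rightarrow> 'c set) \<Rightarrow> 'c set set \<Rightarrow> bool" where
  "bool_iso n f S \<longleftrightarrow> bij_betw f (Pow {0..n}) S \<and>
     (\<forall>a b. a \<subseteq> {0..n} \<longrightarrow> b \<subseteq> {0..n} \<longrightarrow> (f a \<subseteq> f b \<longleftrightarrow> a \<subseteq> b))"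

definition Cp2 :: "nat \<Rightarrow> (int \<times> int) monoid" where
  "Cp2 p = integer_mod_group p \<times>\<times> integer_mod_group p"

end

theory Submission
  imports Defs
begin

text \<open>The subgroup lattice of \<open>C\<^sub>p \<times> C\<^sub>p\<close> is the lattice \<open>M\<^sub>p\<^sub>+\<^sub>1\<close>: the trivial
  subgroup, the whole group, and the \<open>p + 1\<close> lines through the origin, any two of which meet
  trivially; the group is abelian. A transfer system on such a
  lattice is determined by which of the edges \<open>0 \<rightarrow> L\<^sub>i\<close>, \<open>L\<^sub>i \<rightarrow> G\<close> and \<open>0 \<rightarrow> G\<close> it
  contains. Restricting \<open>0 \<rightarrow> G\<close> to the lines forces every \<open>0 \<rightarrow> L\<^sub>i\<close>; restricting
  \<open>L\<^sub>i \<rightarrow> G\<close> to another line \<open>L\<^sub>j\<close> forces \<open>0 \<rightarrow> L\<^sub>j\<close>; and transitivity through a line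
  forces \<open>0 \<rightarrow> G\<close>. This leaves three kinds: no edge into \<open>G\<close> and any set of edges
  \<open>0 \<rightarrow> L\<^sub>i\<close> (the Boolean lattice \<open>B\<close>); the edge \<open>0 \<rightarrow> G\<close> with all \<open>0 \<rightarrow> L\<^sub>i\<close> and any
  set of edges \<open>L\<^sub>i \<rightarrow> G\<close> (the Boolean lattice \<open>T\<close>); or a single edge \<open>L\<^sub>i \<rightarrow> G\<close> with
  the edges \<open>0 \<rightarrow> L\<^sub>j\<close> for all \<open>j \<noteq> i\<close> (the \<open>p + 1\<close> elements of \<open>M\<close>). Comparing these
  relations by inclusion gives both the count and the covering relations.\<close>

section \<open>Transfer systems on a lattice of sets\<close>

locale transfer_system =
  fixes S :: "'a set set" and R :: "('a set \<times> 'a set) set"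
  assumes refines: "(H, K) \<in> R \<Longrightarrow> H \<in> S \<and> K \<in> S \<and> H \<subseteq> K"
    and refl: "H \<in> S \<Longrightarrow> (H, H) \<in> R"
    and antisym: "(H, K) \<in> R \<Longrightarrow> (K, H) \<in> R \<Longrightarrow> H = K"
    and trans: "(H, K) \<in> R \<Longrightarrow> (K, L) \<in> R \<Longrightarrow> (H, L) \<in> R"
    and restrict: "(H, K) \<in> R \<Longrightarrow> L \<in> S \<Longrightarrow> L \<subseteq> K \<Longrightarrow> (H \<inter> L, L) \<in> R"

lemma (in comm_group) conj_set_eq:
  assumes "H \<subseteq> carrier G" and "g \<in> carrier G"
  shows "conj_set G g H = H"
proof -
  have "g \<otimes> h \<otimes> inv g = h" if "h \<in> H" for h
  proof -
    have h: "h \<in> carrier G" using that assms by blast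
    then have "g \<otimes> h \<otimes> inv g = h \<otimes> (g \<otimes> inv g)"
      using assms(2) by (simp add: m_comm[of g h] m_assoc)
    then show ?thesis using assms(2) h by simp
  qed
  then show ?thesis unfolding conj_set_def by simp
qed

lemma (in comm_group) G_transfer_system_iff:
  "G_transfer_system G R \<longleftrightarrow> transfer_system (Sub G) R"
proof
  assume "G_transfer_system G R"
  then show "transfer_system (Sub G) R"
    unfolding G_transfer_system_def transfer_system_def Ball_def
    by (elim conjE) (intro conjI; assumption)
next
  assume "transfer_system (Sub G) R"
  then interpret transfer_system "Sub G" R .
  have "(conj_set G g H, conj_set G g K) \<in> R" if "(H, K) \<in> R" "g \<in> carrier G" for H K g
    using that refines[OF that(1)] by (simp add: Sub_def conj_set_eq subgroup.subset)
  then show "G_transfer_system G R"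
    unfolding G_transfer_system_def using refines refl antisym trans restrict by blast
qed

section \<open>Covering relations in families of sets\<close>

lemma covers_in_subset_iff:
  assumes "A \<subseteq> S" "x \<in> A" "y \<in> A" "\<And>z. z \<in> S \<Longrightarrow> x \<subset> z \<Longrightarrow> z \<subset> y \<Longrightarrow> z \<in> A"
  shows "covers_in S x y \<longleftrightarrow> covers_in A x y"
  using assms unfolding covers_in_def by blast

lemma covers_inI:
  assumes "x \<in> S" "y \<in> S" "x \<subset> y" "\<And>z. z \<in> S \<Longrightarrow> x \<subset> z \<Longrightarrow> z \<subset> y \<Longrightarrow> False"
  shows "covers_in S x y"
  using assms unfolding covers_in_def by blast

lemma covers_in_image_iff:
  assumes "\<And>U V. U \<in> P \<Longrightarrow> V \<in> P \<Longrightarrow> f U \<subseteq> f V \<longleftrightarrow> U \<subseteq> V" and "U \<in> P" "V \<in> P"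
  shows "covers_in (f ` P) (f U) (f V) \<longleftrightarrow> covers_in P U V"
proof -
  have "f U \<subset> f V \<longleftrightarrow> U \<subset> V" if "U \<in> P" "V \<in> P" for U V
    using assms(1)[OF that] assms(1)[OF that(2,1)] by (auto simp: psubset_eq)
  then show ?thesis
    using assms(2,3) unfolding covers_in_def by auto
qed

lemma covers_in_Pow_top_iff: "covers_in (Pow A) U A \<longleftrightarrow> (\<exists>i\<in>A. U = A - {i})"
proof
  assume cov: "covers_in (Pow A) U A"
  then obtain i where i: "i \<in> A" "i \<notin> U" and "U \<subseteq> A" unfolding covers_in_def by blast
  moreover have "insert i U \<in> Pow A" "U \<subset> insert i U"
    using i \<open>U \<subseteq> A\<close> by auto
  ultimately have "insert i U = A"
    using cov unfolding covers_in_def by blast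
  with i show "\<exists>i\<in>A. U = A - {i}" by blast
qed (auto simp: covers_in_def)

lemma covers_in_Pow_bot_iff: "covers_in (Pow A) {} W \<longleftrightarrow> (\<exists>i\<in>A. W = {i})"
proof
  assume cov: "covers_in (Pow A) {} W"
  then obtain i where i: "i \<in> W" and "W \<subseteq> A" unfolding covers_in_def by blast
  moreover have "{i} \<in> Pow A" "{} \<subset> {i}"
    using i \<open>W \<subseteq> A\<close> by auto
  ultimately have "W = {i}"
    using cov unfolding covers_in_def by blast
  with i \<open>W \<subseteq> A\<close> show "\<exists>i\<in>A. W = {i}" by blast
qed (auto simp: covers_in_def)

lemma covers_in_image_Pow_top:
  assumes "\<And>U V. U \<subseteq> A \<Longrightarrow> V \<subseteq> A \<Longrightarrow> f U \<subseteq> f V \<longleftrightarrow> U \<subseteq> V"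
  shows "{x. covers_in (f ` Pow A) x (f A)} = (\<lambda>i. f (A - {i})) ` A"
proof (intro Set.set_eqI iffI)
  fix x assume "x \<in> {x. covers_in (f ` Pow A) x (f A)}"
  then obtain U where U: "U \<subseteq> A" "x = f U" and "covers_in (f ` Pow A) (f U) (f A)"
    unfolding covers_in_def by auto
  then have "covers_in (Pow A) U A"
    using covers_in_image_iff[of "Pow A" f U A] assms by auto
  with U show "x \<in> (\<lambda>i. f (A - {i})) ` A"
    by (auto simp: covers_in_Pow_top_iff)
next
  fix x assume "x \<in> (\<lambda>i. f (A - {i})) ` A"
  then obtain i where "i \<in> A" "x = f (A - {i})" by blast
  moreover have "covers_in (Pow A) (A - {i}) A"
    using \<open>i \<in> A\<close> by (auto simp: covers_in_Pow_top_iff)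
  ultimately show "x \<in> {x. covers_in (f ` Pow A) x (f A)}"
    using covers_in_image_iff[of "Pow A" f "A - {i}" A] assms by auto
qed

lemma covers_in_image_Pow_bot:
  assumes "\<And>U V. U \<subseteq> A \<Longrightarrow> V \<subseteq> A \<Longrightarrow> f U \<subseteq> f V \<longleftrightarrow> U \<subseteq> V"
  shows "{y. covers_in (f ` Pow A) (f {}) y} = (\<lambda>i. f {i}) ` A"
proof (intro Set.set_eqI iffI)
  fix y assume "y \<in> {y. covers_in (f ` Pow A) (f {}) y}"
  then obtain W where W: "W \<subseteq> A" "y = f W" and "covers_in (f ` Pow A) (f {}) (f W)"
    unfolding covers_in_def by auto
  then have "covers_in (Pow A) {} W"
    using covers_in_image_iff[of "Pow A" f "{}" W] assms by auto
  with W show "y \<in> (\<lambda>i. f {i}) ` A"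
    by (auto simp: covers_in_Pow_bot_iff)
next
  fix y assume "y \<in> (\<lambda>i. f {i}) ` A"
  then obtain i where "i \<in> A" "y = f {i}" by blast
  moreover have "covers_in (Pow A) {} {i}"
    using \<open>i \<in> A\<close> by (auto simp: covers_in_Pow_bot_iff)
  ultimately show "y \<in> {y. covers_in (f ` Pow A) (f {}) y}"
    using covers_in_image_iff[of "Pow A" f "{}" "{i}"] assms by auto
qed

section \<open>Transfer systems on the lattice \<open>M\<^sub>n\<^sub>+\<^sub>1\<close>\<close>

lemma transfer_system_data_iff:
  assumes "U \<subseteq> N" and "W \<subseteq> N"
  shows "(c \<longrightarrow> U = N) \<and> (\<forall>i\<in>W. N - {i} \<subseteq> U \<and> (i \<in> U \<longrightarrow> c)) \<longleftrightarrow>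
    W = {} \<and> \<not> c \<or> U = N \<and> c \<or> (\<exists>i\<in>N. U = N - {i} \<and> W = {i} \<and> \<not> c)"
proof
  assume cond: "(c \<longrightarrow> U = N) \<and> (\<forall>i\<in>W. N - {i} \<subseteq> U \<and> (i \<in> U \<longrightarrow> c))"
  show "W = {} \<and> \<not> c \<or> U = N \<and> c \<or> (\<exists>i\<in>N. U = N - {i} \<and> W = {i} \<and> \<not> c)"
  proof (cases "c \<or> W = {}")
    case False
    then obtain i where "i \<in> W" "\<not> c" by blast
    then have "U = N - {i}" using cond assms by blast
    moreover have "j = i" if "j \<in> W" for j
      using cond that \<open>i \<in> W\<close> \<open>U = N - {i}\<close> assms by blast
    then have "W = {i}" using \<open>i \<in> W\<close> by blast
    ultimately show ?thesis using \<open>i \<in> W\<close> \<open>\<not> c\<close> assms by blast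
  qed (use cond in blast)
qed (use assms in auto)

locale diamond_lattice =
  fixes S :: "'a set set" and bot top :: "'a set" and atom :: "nat \<Rightarrow> 'a set" and n :: nat
  assumes carrier_eq: "S = {bot, top} \<union> atom ` {0..n}"
    and inj_atom: "inj_on atom {0..n}"
    and bot_psubset_atom: "i \<le> n \<Longrightarrow> bot \<subset> atom i"
    and atom_psubset_top: "i \<le> n \<Longrightarrow> atom i \<subset> top"
    and atom_Int_atom: "i \<le> n \<Longrightarrow> j \<le> n \<Longrightarrow> i \<noteq> j \<Longrightarrow> atom i \<inter> atom j = bot"
begin

abbreviation "N \<equiv> {0..n}"

abbreviation "transfer_systems \<equiv> {R. transfer_system S R}"

lemma atom_neq [simp]:
  "i \<le> n \<Longrightarrow> atom i \<noteq> bot" "i \<le> n \<Longrightarrow> bot \<noteq> atom i"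
  "i \<le> n \<Longrightarrow> atom i \<noteq> top" "i \<le> n \<Longrightarrow> top \<noteq> atom i"
  using bot_psubset_atom atom_psubset_top by blast+

lemma bot_neq_top [simp]: "bot \<noteq> top" "top \<noteq> bot"
  using bot_psubset_atom[of 0] atom_psubset_top[of 0] by auto

lemma atom_eq_iff [simp]: "i \<le> n \<Longrightarrow> j \<le> n \<Longrightarrow> atom i = atom j \<longleftrightarrow> i = j"
  using inj_atom by (auto dest: inj_onD)

lemma atom_subset_iff [simp]: "i \<le> n \<Longrightarrow> j \<le> n \<Longrightarrow> atom i \<subseteq> atom j \<longleftrightarrow> i = j"
  using atom_Int_atom[of i j] bot_psubset_atom[of i] by auto

lemma bot_subset_atom [simp]: "i \<le> n \<Longrightarrow> bot \<subseteq> atom i"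
  and atom_subset_top [simp]: "i \<le> n \<Longrightarrow> atom i \<subseteq> top"
  and bot_subset_top [simp]: "bot \<subseteq> top"
  using bot_psubset_atom atom_psubset_top by blast+

lemma top_subset_atom [simp]: "i \<le> n \<Longrightarrow> \<not> top \<subseteq> atom i"
  and atom_subset_bot [simp]: "i \<le> n \<Longrightarrow> \<not> atom i \<subseteq> bot"
  and top_subset_bot [simp]: "\<not> top \<subseteq> bot"
  using bot_psubset_atom atom_psubset_top by blast+

lemma bot_in [simp]: "bot \<in> S" and top_in [simp]: "top \<in> S" and atom_in [simp]: "i \<le> n \<Longrightarrow> atom i \<in> S"
  using carrier_eq by auto

lemma carrier_cases [consumes 1]:
  assumes "H \<in> S"
  obtains "H = bot" | "H = top" | i where "i \<le> n" "H = atom i"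
  using assms carrier_eq by auto

lemma bot_subset [simp]: "H \<in> S \<Longrightarrow> bot \<subseteq> H"
  and subset_top [simp]: "H \<in> S \<Longrightarrow> H \<subseteq> top"
  by (erule carrier_cases; simp)+

lemma atom_Int_atom_eq:
  "i \<le> n \<Longrightarrow> j \<le> n \<Longrightarrow> atom i \<inter> atom j = (if i = j then atom i else bot)"
  using atom_Int_atom by simp

lemma Int_bot_top [simp]:
  "H \<in> S \<Longrightarrow> bot \<inter> H = bot" "H \<in> S \<Longrightarrow> H \<inter> bot = bot"
  "H \<in> S \<Longrightarrow> top \<inter> H = H" "H \<in> S \<Longrightarrow> H \<inter> top = H"
  using bot_subset subset_top by blast+

definition transfers :: "nat set \<Rightarrow> nat set \<Rightarrow> bool \<Rightarrow> ('a set \<times> 'a set) set" where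
  "transfers U W c = Id_on S \<union> (\<lambda>i. (bot, atom i)) ` U \<union> (\<lambda>i. (atom i, top)) ` W
     \<union> (if c then {(bot, top)} else {})"

lemma transfersE [elim!]:
  assumes "(H, K) \<in> transfers U W c"
  obtains "H = K" "H \<in> S" | i where "i \<in> U" "H = bot" "K = atom i"
    | i where "i \<in> W" "H = atom i" "K = top" | "c" "H = bot" "K = top"
  using assms unfolding transfers_def by (auto split: if_splits)

lemma transfers_refl [simp, intro]: "H \<in> S \<Longrightarrow> (H, H) \<in> transfers U W c"
  and transfers_bot_atom [simp, intro]: "i \<in> U \<Longrightarrow> (bot, atom i) \<in> transfers U W c"
  and transfers_atom_top [simp, intro]: "i \<in> W \<Longrightarrow> (atom i, top) \<in> transfers U W c"
  and transfers_bot_top [simp, intro]: "c \<Longrightarrow> (bot, top) \<in> transfers U W c"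
  unfolding transfers_def by auto

context
  fixes U W :: "nat set" and c :: bool assumes U: "U \<subseteq> N" and W: "W \<subseteq> N"
begin

lemma U_le [simp]: "i \<in> U \<Longrightarrow> i \<le> n" and W_le [simp]: "i \<in> W \<Longrightarrow> i \<le> n"
  using U W by auto

lemma transfers_refines: "(H, K) \<in> transfers U W c \<Longrightarrow> H \<in> S \<and> K \<in> S \<and> H \<subseteq> K"
  by (erule transfersE) simp_all

lemma transfers_trans:
  "(H, K) \<in> transfers U W c \<Longrightarrow> (K, L) \<in> transfers U W c \<Longrightarrow> (\<forall>i\<in>W. i \<in> U \<longrightarrow> c)
    \<Longrightarrow> (H, L) \<in> transfers U W c"
  by (erule transfersE; erule transfersE) auto

lemma transfers_restrict:
  "(H, K) \<in> transfers U W c \<Longrightarrow> L \<in> S \<Longrightarrow> L \<subseteq> K \<Longrightarrow> (c \<longrightarrow> U = N) \<Longrightarrow> (\<forall>i\<in>W. N - {i} \<subseteq> U)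
    \<Longrightarrow> (H \<inter> L, L) \<in> transfers U W c"
  by (erule transfersE; erule carrier_cases)
    (fastforce simp: atom_Int_atom_eq Int_absorb1 Int_absorb2)+

lemma bot_atom_in_transfers_iff [simp]: "j \<le> n \<Longrightarrow> (bot, atom j) \<in> transfers U W c \<longleftrightarrow> j \<in> U"
  and atom_top_in_transfers_iff [simp]: "j \<le> n \<Longrightarrow> (atom j, top) \<in> transfers U W c \<longleftrightarrow> j \<in> W"
  and bot_top_in_transfers_iff [simp]: "(bot, top) \<in> transfers U W c \<longleftrightarrow> c"
  by auto

lemma transfer_system_transfers_iff:
  "transfer_system S (transfers U W c) \<longleftrightarrow> (c \<longrightarrow> U = N) \<and> (\<forall>i\<in>W. N - {i} \<subseteq> U \<and> (i \<in> U \<longrightarrow> c))"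
    (is "?ts \<longleftrightarrow> ?cond")
proof
  assume ts: ?ts
  have "U = N" if c
  proof -
    have "(bot \<inter> atom j, atom j) \<in> transfers U W c" if "j \<le> n" for j
      using transfer_system.restrict[OF ts transfers_bot_top[OF \<open>c\<close>] atom_in[OF that]
          atom_subset_top[OF that]] .
    then have "N \<subseteq> U" by auto
    with U show ?thesis by blast
  qed
  moreover have "N - {i} \<subseteq> U" if "i \<in> W" for i
  proof
    fix j assume j: "j \<in> N - {i}"
    have "(atom i \<inter> atom j, atom j) \<in> transfers U W c"
      using transfer_system.restrict[OF ts transfers_atom_top[OF that]] j by simp
    with j that show "j \<in> U" by (simp add: atom_Int_atom)
  qed
  moreover have c if "i \<in> W" "i \<in> U" for i
    using transfer_system.trans[OF ts transfers_bot_atom[OF that(2)] transfers_atom_top[OF that(1)]]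
    by simp
  ultimately show ?cond by blast
next
  assume cond: ?cond
  show ?ts
  proof
    fix H K assume "(H, K) \<in> transfers U W c"
    then show "H \<in> S \<and> K \<in> S \<and> H \<subseteq> K" by (rule transfers_refines)
  next
    fix H K assume "(H, K) \<in> transfers U W c" "(K, H) \<in> transfers U W c"
    then show "H = K" by (meson transfers_refines subset_antisym)
  next
    fix H K L assume "(H, K) \<in> transfers U W c" "(K, L) \<in> transfers U W c"
    then show "(H, L) \<in> transfers U W c" by (rule transfers_trans) (use cond in blast)
  next
    fix H K L assume "(H, K) \<in> transfers U W c" "L \<in> S" "L \<subseteq> K"
    then show "(H \<inter> L, L) \<in> transfers U W c" by (rule transfers_restrict) (use cond in blast)+
  qed simp
qed

end

lemma transfer_system_eq_transfers:
  assumes "transfer_system S R"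
  shows "R = transfers {i\<in>N. (bot, atom i) \<in> R} {i\<in>N. (atom i, top) \<in> R} ((bot, top) \<in> R)"
    (is "R = ?T")
proof (rule subset_antisym; rule subrelI)
  fix H K assume "(H, K) \<in> R"
  moreover have "H \<in> S" "K \<in> S" "H \<subseteq> K"
    using transfer_system.refines[OF assms \<open>(H, K) \<in> R\<close>] by auto
  ultimately show "(H, K) \<in> ?T"
    by (auto elim!: carrier_cases)
next
  fix H K assume "(H, K) \<in> ?T"
  then show "(H, K) \<in> R"
    by (elim transfersE) (auto intro: transfer_system.refl[OF assms])
qed

lemma transfers_subset_iff:
  assumes "U \<subseteq> N" "W \<subseteq> N" "U' \<subseteq> N" "W' \<subseteq> N"
  shows "transfers U W c \<subseteq> transfers U' W' c' \<longleftrightarrow> U \<subseteq> U' \<and> W \<subseteq> W' \<and> (c \<longrightarrow> c')"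
proof
  assume sub: "transfers U W c \<subseteq> transfers U' W' c'"
  have "i \<in> U'" if "i \<in> U" for i
    using sub[THEN subsetD, of "(bot, atom i)"] that assms by auto
  moreover have "i \<in> W'" if "i \<in> W" for i
    using sub[THEN subsetD, of "(atom i, top)"] that assms by auto
  moreover have "c'" if c
    using sub[THEN subsetD, of "(bot, top)"] that assms by auto
  ultimately show "U \<subseteq> U' \<and> W \<subseteq> W' \<and> (c \<longrightarrow> c')" by blast
next
  assume "U \<subseteq> U' \<and> W \<subseteq> W' \<and> (c \<longrightarrow> c')"
  then show "transfers U W c \<subseteq> transfers U' W' c'"
    by (intro subrelI) (erule transfersE; blast)
qed

lemma transfers_Int:
  assumes "U \<subseteq> N" "W \<subseteq> N" "U' \<subseteq> N" "W' \<subseteq> N"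
  shows "transfers U W c \<inter> transfers U' W' c' = transfers (U \<inter> U') (W \<inter> W') (c \<and> c')"
proof (rule subset_antisym)
  show "transfers U W c \<inter> transfers U' W' c' \<subseteq> transfers (U \<inter> U') (W \<inter> W') (c \<and> c')"
  proof (rule subrelI)
    fix H K assume "(H, K) \<in> transfers U W c \<inter> transfers U' W' c'"
    then have HK: "(H, K) \<in> transfers U W c" and HK': "(H, K) \<in> transfers U' W' c'" by auto
    from HK show "(H, K) \<in> transfers (U \<inter> U') (W \<inter> W') (c \<and> c')"
    proof (cases rule: transfersE)
      case (2 i)
      with HK' assms(1,3) show ?thesis by auto
    next
      case (3 i)
      with HK' assms(2,4) show ?thesis by auto
    qed (use HK' assms in auto)
  qed
  show "transfers (U \<inter> U') (W \<inter> W') (c \<and> c') \<subseteq> transfers U W c \<inter> transfers U' W' c'"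
    using assms by (simp add: transfers_subset_iff le_infI1)
qed

definition lower_system :: "nat set \<Rightarrow> ('a set \<times> 'a set) set" where
  "lower_system U = transfers U {} False"

definition middle_system :: "nat \<Rightarrow> ('a set \<times> 'a set) set" where
  "middle_system i = transfers (N - {i}) {i} False"

definition upper_system :: "nat set \<Rightarrow> ('a set \<times> 'a set) set" where
  "upper_system W = transfers N W True"

abbreviation "lower_block \<equiv> lower_system ` Pow N"
abbreviation "middle_block \<equiv> middle_system ` N"
abbreviation "upper_block \<equiv> upper_system ` Pow N"

lemma transfer_systems_eq:
  "transfer_systems = lower_block \<union> middle_block \<union> upper_block"
proof (intro Set.set_eqI iffI)
  fix R assume "R \<in> transfer_systems"
  then have ts: "transfer_system S R" by simp
  define U W c where "U = {i\<in>N. (bot, atom i) \<in> R}" and "W = {i\<in>N. (atom i, top) \<in> R}"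
    and "c = ((bot, top) \<in> R)"
  have UW: "U \<subseteq> N" "W \<subseteq> N" unfolding U_def W_def by auto
  have R: "R = transfers U W c"
    unfolding U_def W_def c_def by (rule transfer_system_eq_transfers[OF ts])
  with ts have "W = {} \<and> \<not> c \<or> U = N \<and> c \<or> (\<exists>i\<in>N. U = N - {i} \<and> W = {i} \<and> \<not> c)"
    using transfer_system_transfers_iff[OF UW] transfer_system_data_iff[OF UW] by simp
  then show "R \<in> lower_block \<union> middle_block \<union> upper_block"
    unfolding R lower_system_def middle_system_def upper_system_def using UW by auto
next
  fix R assume "R \<in> lower_block \<union> middle_block \<union> upper_block"
  then show "R \<in> transfer_systems"
    unfolding lower_system_def middle_system_def upper_system_def
    by (auto simp: transfer_system_transfers_iff)
qed

lemma block_subset_iff [simp]: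
  "U \<subseteq> N \<Longrightarrow> V \<subseteq> N \<Longrightarrow> lower_system U \<subseteq> lower_system V \<longleftrightarrow> U \<subseteq> V"
  "U \<subseteq> N \<Longrightarrow> i \<in> N \<Longrightarrow> lower_system U \<subseteq> middle_system i \<longleftrightarrow> i \<notin> U"
  "U \<subseteq> N \<Longrightarrow> W \<subseteq> N \<Longrightarrow> lower_system U \<subseteq> upper_system W"
  "U \<subseteq> N \<Longrightarrow> i \<in> N \<Longrightarrow> \<not> middle_system i \<subseteq> lower_system U"
  "i \<in> N \<Longrightarrow> j \<in> N \<Longrightarrow> middle_system i \<subseteq> middle_system j \<longleftrightarrow> i = j"
  "i \<in> N \<Longrightarrow> W \<subseteq> N \<Longrightarrow> middle_system i \<subseteq> upper_system W \<longleftrightarrow> i \<in> W"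
  "U \<subseteq> N \<Longrightarrow> W \<subseteq> N \<Longrightarrow> \<not> upper_system W \<subseteq> lower_system U"
  "i \<in> N \<Longrightarrow> W \<subseteq> N \<Longrightarrow> \<not> upper_system W \<subseteq> middle_system i"
  "W \<subseteq> N \<Longrightarrow> W' \<subseteq> N \<Longrightarrow> upper_system W \<subseteq> upper_system W' \<longleftrightarrow> W \<subseteq> W'"
  unfolding lower_system_def middle_system_def upper_system_def
  by (subst transfers_subset_iff; auto)+

lemma block_eq_iff [simp]:
  "U \<subseteq> N \<Longrightarrow> V \<subseteq> N \<Longrightarrow> lower_system U = lower_system V \<longleftrightarrow> U = V"
  "U \<subseteq> N \<Longrightarrow> i \<in> N \<Longrightarrow> lower_system U \<noteq> middle_system i"
  "U \<subseteq> N \<Longrightarrow> i \<in> N \<Longrightarrow> middle_system i \<noteq> lower_system U"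
  "U \<subseteq> N \<Longrightarrow> W \<subseteq> N \<Longrightarrow> lower_system U \<noteq> upper_system W"
  "U \<subseteq> N \<Longrightarrow> W \<subseteq> N \<Longrightarrow> upper_system W \<noteq> lower_system U"
  "i \<in> N \<Longrightarrow> j \<in> N \<Longrightarrow> middle_system i = middle_system j \<longleftrightarrow> i = j"
  "i \<in> N \<Longrightarrow> W \<subseteq> N \<Longrightarrow> middle_system i \<noteq> upper_system W"
  "i \<in> N \<Longrightarrow> W \<subseteq> N \<Longrightarrow> upper_system W \<noteq> middle_system i"
  "W \<subseteq> N \<Longrightarrow> W' \<subseteq> N \<Longrightarrow> upper_system W = upper_system W' \<longleftrightarrow> W = W'"
  by (auto simp only: set_eq_subset block_subset_iff)

lemma inj_on_lower_system: "inj_on lower_system (Pow N)"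
  and inj_on_middle_system: "inj_on middle_system N"
  and inj_on_upper_system: "inj_on upper_system (Pow N)"
  by (auto intro!: inj_onI)

lemma bool_iso_lower_system: "bool_iso n lower_system lower_block"
  and bool_iso_upper_system: "bool_iso n upper_system upper_block"
  unfolding bool_iso_def by (auto simp: bij_betw_def inj_on_lower_system inj_on_upper_system)

lemma transfer_systemsE:
  assumes "R \<in> transfer_systems"
  obtains U where "U \<subseteq> N" "R = lower_system U" | i where "i \<in> N" "R = middle_system i"
    | W where "W \<subseteq> N" "R = upper_system W"
  using assms unfolding transfer_systems_eq by blast

lemma blocks_disjoint:
  "lower_block \<inter> middle_block = {}"
  "lower_block \<inter> upper_block = {}"
  "middle_block \<inter> upper_block = {}"
  by auto

lemma card_blocks:
  "card lower_block = 2 ^ (n + 1)"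
  "card middle_block = n + 1"
  "card upper_block = 2 ^ (n + 1)"
  by (simp_all add: card_image card_Pow inj_on_lower_system inj_on_middle_system
      inj_on_upper_system)

lemma card_transfer_systems: "card transfer_systems = 2 ^ (n + 2) + n + 1"
proof -
  have "card transfer_systems
      = card lower_block + card middle_block + card upper_block"
    unfolding transfer_systems_eq by (simp add: card_Un_disjoint blocks_disjoint Int_Un_distrib2)
  then show ?thesis by (simp add: card_blocks)
qed

lemma middle_Int_lower: "i \<in> N \<Longrightarrow> middle_system i \<inter> lower_system N = lower_system (N - {i})"
  unfolding middle_system_def lower_system_def by (subst transfers_Int) auto

lemma middle_Un_upper: "i \<in> N \<Longrightarrow> middle_system i \<union> upper_system {} = upper_system {i}"
  unfolding middle_system_def upper_system_def transfers_def by auto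

lemma covers_lower_lower_iff:
  "U \<subseteq> N \<Longrightarrow> V \<subseteq> N \<Longrightarrow>
    covers_in transfer_systems (lower_system U) (lower_system V) \<longleftrightarrow>
    covers_in lower_block (lower_system U) (lower_system V)"
  by (rule covers_in_subset_iff) (auto simp: transfer_systems_eq)

lemma covers_upper_upper_iff:
  "W \<subseteq> N \<Longrightarrow> W' \<subseteq> N \<Longrightarrow>
    covers_in transfer_systems (upper_system W) (upper_system W') \<longleftrightarrow>
    covers_in upper_block (upper_system W) (upper_system W')"
  by (rule covers_in_subset_iff) (auto simp: transfer_systems_eq)

lemma transfer_system_blocks [simp]:
  "U \<subseteq> N \<Longrightarrow> transfer_system S (lower_system U)"
  "i \<in> N \<Longrightarrow> transfer_system S (middle_system i)"
  "W \<subseteq> N \<Longrightarrow> transfer_system S (upper_system W)"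
  using transfer_systems_eq by blast+

lemma covers_lower_middle_iff:
  assumes "U \<subseteq> N" "i \<in> N"
  shows "covers_in transfer_systems (lower_system U) (middle_system i) \<longleftrightarrow> U = N - {i}"
proof
  assume cov: "covers_in transfer_systems (lower_system U) (middle_system i)"
  then have "U \<subseteq> N - {i}"
    using assms unfolding covers_in_def by auto
  show "U = N - {i}"
  proof (rule ccontr)
    assume "U \<noteq> N - {i}"
    then have "lower_system U \<subset> lower_system (N - {i})" "lower_system (N - {i}) \<subset> middle_system i"
      using assms \<open>U \<subseteq> N - {i}\<close> by (auto simp: psubset_eq)
    then show False
      using cov assms unfolding covers_in_def by auto
  qed
next
  assume "U = N - {i}"
  moreover have "covers_in transfer_systems (lower_system (N - {i})) (middle_system i)"
  proof (rule covers_inI)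
    fix R assume "R \<in> transfer_systems" "lower_system (N - {i}) \<subset> R" "R \<subset> middle_system i"
    then show False
      using assms by (elim transfer_systemsE) (auto simp: psubset_eq)
  qed (use assms in \<open>auto simp: psubset_eq\<close>)
  ultimately show "covers_in transfer_systems (lower_system U) (middle_system i)" by simp
qed

lemma covers_middle_upper_iff:
  assumes "i \<in> N" "W \<subseteq> N"
  shows "covers_in transfer_systems (middle_system i) (upper_system W) \<longleftrightarrow> W = {i}"
proof
  assume cov: "covers_in transfer_systems (middle_system i) (upper_system W)"
  then have "i \<in> W"
    using assms unfolding covers_in_def by auto
  show "W = {i}"
  proof (rule ccontr)
    assume "W \<noteq> {i}"
    then have "middle_system i \<subset> upper_system {i}" "upper_system {i} \<subset> upper_system W"
      using assms \<open>i \<in> W\<close> by (auto simp: psubset_eq)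
    then show False
      using cov assms unfolding covers_in_def by auto
  qed
next
  assume "W = {i}"
  moreover have "covers_in transfer_systems (middle_system i) (upper_system {i})"
  proof (rule covers_inI)
    fix R assume "R \<in> transfer_systems" "middle_system i \<subset> R" "R \<subset> upper_system {i}"
    then show False
      using assms by (elim transfer_systemsE) (auto simp: psubset_eq)
  qed (use assms in \<open>auto simp: psubset_eq\<close>)
  ultimately show "covers_in transfer_systems (middle_system i) (upper_system W)" by simp
qed

lemma covers_lower_upper_iff:
  assumes "U \<subseteq> N" "W \<subseteq> N"
  shows "covers_in transfer_systems (lower_system U) (upper_system W) \<longleftrightarrow> U = N \<and> W = {}"
proof
  assume cov: "covers_in transfer_systems (lower_system U) (upper_system W)"
  have "U = N"
  proof (rule ccontr)
    assume "U \<noteq> N"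
    then have "lower_system U \<subset> lower_system N" "lower_system N \<subset> upper_system W"
      using assms by (auto simp: psubset_eq)
    then show False
      using cov assms unfolding covers_in_def by auto
  qed
  moreover have "W = {}"
  proof (rule ccontr)
    assume "W \<noteq> {}"
    then have "lower_system U \<subset> upper_system {}" "upper_system {} \<subset> upper_system W"
      using assms by (auto simp: psubset_eq)
    then show False
      using cov assms unfolding covers_in_def by auto
  qed
  ultimately show "U = N \<and> W = {}" ..
next
  assume "U = N \<and> W = {}"
  moreover have "covers_in transfer_systems (lower_system N) (upper_system {})"
  proof (rule covers_inI)
    fix R assume "R \<in> transfer_systems" "lower_system N \<subset> R" "R \<subset> upper_system {}"
    then show False
      by (elim transfer_systemsE) (auto simp: psubset_eq)
  qed (auto simp: psubset_eq)
  ultimately show "covers_in transfer_systems (lower_system U) (upper_system W)" by simp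
qed

lemma covers_transfer_systems_iff:
  "covers_in transfer_systems x y \<longleftrightarrow>
     covers_in lower_block x y \<or> covers_in upper_block x y
     \<or> (\<exists>i\<in>N. x = lower_system (N - {i}) \<and> y = middle_system i)
     \<or> (\<exists>i\<in>N. x = middle_system i \<and> y = upper_system {i})
     \<or> x = lower_system N \<and> y = upper_system {}"
  (is "_ \<longleftrightarrow> ?rhs")
proof
  assume cov: "covers_in transfer_systems x y"
  then have "x \<in> transfer_systems" "y \<in> transfer_systems" "x \<subset> y"
    unfolding covers_in_def by auto
  then show ?rhs
    using cov
    by (elim transfer_systemsE)
      (simp_all add: covers_lower_lower_iff covers_upper_upper_iff covers_lower_middle_iff
        covers_middle_upper_iff covers_lower_upper_iff psubset_eq)
next
  assume ?rhs
  then show "covers_in transfer_systems x y"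
  proof (elim disjE)
    assume cov: "covers_in lower_block x y"
    then obtain U V where "U \<subseteq> N" "V \<subseteq> N" "x = lower_system U" "y = lower_system V"
      unfolding covers_in_def by auto
    with cov show ?thesis by (simp add: covers_lower_lower_iff)
  next
    assume cov: "covers_in upper_block x y"
    then obtain W W' where "W \<subseteq> N" "W' \<subseteq> N" "x = upper_system W" "y = upper_system W'"
      unfolding covers_in_def by auto
    with cov show ?thesis by (simp add: covers_upper_upper_iff)
  qed (auto simp: covers_lower_middle_iff covers_middle_upper_iff covers_lower_upper_iff)
qed

lemma bij_betw_Int_lower:
  "bij_betw (\<lambda>m. m \<inter> lower_system N) middle_block {x. covers_in lower_block x (lower_system N)}"
proof -
  have "{x. covers_in lower_block x (lower_system N)} = (\<lambda>i. lower_system (N - {i})) ` N"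
    by (rule covers_in_image_Pow_top) simp
  moreover have "bij_betw (\<lambda>m. m \<inter> lower_system N) middle_block ((\<lambda>i. lower_system (N - {i})) ` N)"
    by (rule bij_betw_imageI) (auto simp: inj_on_def middle_Int_lower image_image)
  ultimately show ?thesis by simp
qed

lemma bij_betw_Un_upper:
  "bij_betw (\<lambda>m. m \<union> upper_system {}) middle_block {y. covers_in upper_block (upper_system {}) y}"
proof -
  have "{y. covers_in upper_block (upper_system {}) y} = (\<lambda>i. upper_system {i}) ` N"
    by (rule covers_in_image_Pow_bot) simp
  moreover have "bij_betw (\<lambda>m. m \<union> upper_system {}) middle_block ((\<lambda>i. upper_system {i}) ` N)"
    by (rule bij_betw_imageI) (auto simp: inj_on_def middle_Un_upper image_image)
  ultimately show ?thesis by simp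
qed

lemma covers_transfer_systems_eq:
  "{(x, y). covers_in transfer_systems x y} =
     {(x, y). covers_in lower_block x y} \<union> {(x, y). covers_in upper_block x y}
     \<union> {(m \<inter> lower_system N, m) | m. m \<in> middle_block}
     \<union> {(m, m \<union> upper_system {}) | m. m \<in> middle_block}
     \<union> {(lower_system N, upper_system {})}"
proof -
  have meet: "{(m \<inter> lower_system N, m) | m. m \<in> middle_block}
      = (\<lambda>i. (lower_system (N - {i}), middle_system i)) ` N"
  proof -
    have "{(m \<inter> lower_system N, m) | m. m \<in> middle_block}
        = (\<lambda>i. (middle_system i \<inter> lower_system N, middle_system i)) ` N"
      by blast
    also have "\<dots> = (\<lambda>i. (lower_system (N - {i}), middle_system i)) ` N"
      by (rule image_cong) (simp_all add: middle_Int_lower)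
    finally show ?thesis .
  qed
  have join: "{(m, m \<union> upper_system {}) | m. m \<in> middle_block}
      = (\<lambda>i. (middle_system i, upper_system {i})) ` N"
  proof -
    have "{(m, m \<union> upper_system {}) | m. m \<in> middle_block}
        = (\<lambda>i. (middle_system i, middle_system i \<union> upper_system {})) ` N"
      by blast
    also have "\<dots> = (\<lambda>i. (middle_system i, upper_system {i})) ` N"
      by (rule image_cong) (simp_all add: middle_Un_upper)
    finally show ?thesis .
  qed
  show ?thesis
    unfolding meet join
  proof (rule Set.set_eqI)
    fix z :: "('a set \<times> 'a set) set \<times> ('a set \<times> 'a set) set"
    obtain x y where z: "z = (x, y)" by fastforce
    show "z \<in> {(x, y). covers_in transfer_systems x y} \<longleftrightarrow>
      z \<in> {(x, y). covers_in lower_block x y} \<union> {(x, y). covers_in upper_block x y}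
        \<union> (\<lambda>i. (lower_system (N - {i}), middle_system i)) ` N
        \<union> (\<lambda>i. (middle_system i, upper_system {i})) ` N
        \<union> {(lower_system N, upper_system {})}"
      unfolding z
      by (simp only: mem_Collect_eq case_prod_conv Un_iff singleton_iff image_iff prod.inject
          covers_transfer_systems_iff disj_assoc)
  qed
qed

end

section \<open>The subgroup lattice of \<open>C\<^sub>p \<times> C\<^sub>p\<close>\<close>

lemma (in group) card_subgroup_dvd_card:
  assumes "subgroup I G" "subgroup J G" "I \<subseteq> J"
  shows "card I dvd card J"
proof -
  interpret J: group "G\<lparr>carrier := J\<rparr>"
    using assms(2) by (rule subgroup.subgroup_is_group) (rule is_group)
  have "card (rcosets\<^bsub>G\<lparr>carrier := J\<rparr>\<^esub> I) * card I = card J"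
    using J.lagrange[OF subgroup_incl[OF assms]] by (simp add: order_def)
  then show ?thesis by (metis dvd_triv_right)
qed

lemma (in group) subgroups_of_prime_card_eq:
  assumes "Factorial_Ring.prime p"
    and H: "subgroup H G" "card H = p" and K: "subgroup K G" "card K = p"
    and h: "h \<in> H" "h \<in> K" "h \<noteq> \<one>"
  shows "H = K"
proof -
  have HK: "subgroup (H \<inter> K) G" using subgroups_Inter_pair[OF H(1) K(1)] .
  have "0 < p" using \<open>Factorial_Ring.prime p\<close> by (rule prime_gt_0_nat)
  then have fin: "finite H" "finite K" using H(2) K(2) by (auto intro: card_ge_0_finite)
  have "{\<one>, h} \<subseteq> H \<inter> K" using h H(1) K(1) by (auto intro: subgroup.one_closed)
  then have "2 \<le> card (H \<inter> K)"
    using h(3) card_mono[of "H \<inter> K" "{\<one>, h}"] fin by auto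
  moreover have "card (H \<inter> K) dvd p"
    using card_subgroup_dvd_card[OF HK H(1)] H(2) by simp
  ultimately have "card (H \<inter> K) = p"
    using \<open>Factorial_Ring.prime p\<close> unfolding prime_nat_iff by force
  then show "H = K"
    using card_subset_eq[of H "H \<inter> K"] card_subset_eq[of K "H \<inter> K"] fin H(2) K(2) by auto
qed

lemma mult_Cp2 [simp]: "(a, b) \<otimes>\<^bsub>Cp2 p\<^esub> (c, d) = ((a + c) mod int p, (b + d) mod int p)"
  by (simp add: Cp2_def)

lemma one_Cp2 [simp]: "\<one>\<^bsub>Cp2 p\<^esub> = (0, 0)"
  by (simp add: Cp2_def)

lemma comm_group_Cp2: "comm_group (Cp2 p)"
proof -
  have "group (Cp2 p)" unfolding Cp2_def by (simp add: DirProd_group)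
  then show ?thesis
    by (rule group.group_comm_groupI) (auto simp: Cp2_def add.commute)
qed

lemma carrier_Cp2: "0 < p \<Longrightarrow> carrier (Cp2 p) = {0..<int p} \<times> {0..<int p}"
  by (simp add: Cp2_def carrier_integer_mod_group)

lemma inv_Cp2:
  "x \<in> carrier (Cp2 p) \<Longrightarrow> inv\<^bsub>Cp2 p\<^esub> x = ((- fst x) mod int p, (- snd x) mod int p)"
  by (cases x) (simp add: Cp2_def)

text \<open>\<open>line p v\<close> is the cyclic subgroup generated by \<open>v\<close>; the \<open>p + 1\<close> lines through the
  origin are spanned by \<open>(1, i)\<close> for the slopes \<open>i < p\<close> and by \<open>(0, 1)\<close> for \<open>i = p\<close>.\<close>

definition line :: "nat \<Rightarrow> int \<times> int \<Rightarrow> (int \<times> int) set" where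
  "line p v = (\<lambda>k. (k * fst v mod int p, k * snd v mod int p)) ` {0..<int p}"

definition line_dir :: "nat \<Rightarrow> nat \<Rightarrow> int \<times> int" where
  "line_dir p i = (if i < p then (1, int i) else (0, 1))"

lemma line_subgroup:
  assumes "0 < p"
  shows "subgroup (line p v) (Cp2 p)"
proof (rule group.subgroupI[OF comm_group.axioms(2)[OF comm_group_Cp2]])
  show "line p v \<subseteq> carrier (Cp2 p)"
    using assms by (auto simp: line_def carrier_Cp2)
  show "line p v \<noteq> {}"
    using assms by (auto simp: line_def)
next
  fix x assume "x \<in> line p v"
  then obtain k where k: "k \<in> {0..<int p}" "x = (k * fst v mod int p, k * snd v mod int p)"
    unfolding line_def by blast
  then have "x \<in> carrier (Cp2 p)"
    using assms by (auto simp: carrier_Cp2)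
  then have "inv\<^bsub>Cp2 p\<^esub> x = ((- k) mod int p * fst v mod int p, (- k) mod int p * snd v mod int p)"
    using k by (simp add: inv_Cp2 mod_minus_eq mod_mult_left_eq)
  then show "inv\<^bsub>Cp2 p\<^esub> x \<in> line p v"
    using assms unfolding line_def by (auto intro: image_eqI)
next
  fix x y assume "x \<in> line p v" "y \<in> line p v"
  then obtain k l where "x = (k * fst v mod int p, k * snd v mod int p)"
    "y = (l * fst v mod int p, l * snd v mod int p)"
    unfolding line_def by blast
  then have "x \<otimes>\<^bsub>Cp2 p\<^esub> y
      = ((k + l) mod int p * fst v mod int p, (k + l) mod int p * snd v mod int p)"
    by (simp add: mod_add_eq mod_mult_left_eq distrib_right)
  then show "x \<otimes>\<^bsub>Cp2 p\<^esub> y \<in> line p v"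
    using assms unfolding line_def by (auto intro: image_eqI)
qed

lemma card_line_dir: "0 < p \<Longrightarrow> card (line p (line_dir p i)) = p"
  unfolding line_def line_dir_def
  by (subst card_image) (auto simp: inj_on_def)

lemma line_dir_in_line_iff:
  assumes "1 < p" "i \<le> p" "j \<le> p"
  shows "line_dir p i \<in> line p (line_dir p j) \<longleftrightarrow> i = j"
proof
  assume "line_dir p i \<in> line p (line_dir p j)"
  then obtain k where k: "0 \<le> k" "k < int p"
    "line_dir p i = (k * fst (line_dir p j) mod int p, k * snd (line_dir p j) mod int p)"
    unfolding line_def by auto
  then show "i = j"
    using assms unfolding line_dir_def by (auto split: if_splits)
next
  assume "i = j"
  then show "line_dir p i \<in> line p (line_dir p j)"
    using assms unfolding line_def line_dir_def by (auto intro!: image_eqI[where x = 1])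
qed

lemma mem_line_dir:
  assumes "Factorial_Ring.prime p" and x: "(a, b) \<in> carrier (Cp2 p)" "(a, b) \<noteq> (0, 0)"
  shows "\<exists>i\<le>p. (a, b) \<in> line p (line_dir p i)"
proof -
  have p: "1 < p" using assms(1) by (rule prime_gt_1_nat)
  have ab: "0 \<le> a" "a < int p" "0 \<le> b" "b < int p"
    using x p by (auto simp: carrier_Cp2)
  show ?thesis
  proof (cases "a = 0")
    case True
    then have "(a, b) \<in> line p (line_dir p p)"
      using ab unfolding line_def line_dir_def by (auto intro!: image_eqI[where x = b])
    then show ?thesis by blast
  next
    case False
    have "coprime (int p) a"
      using assms(1) ab False by (auto intro!: prime_imp_coprime simp: zdvd_not_zless)
    then obtain u v where "u * a + v * int p = 1"
      using bezout_int[of a "int p"] by (auto simp: coprime_iff_gcd_eq_1 gcd.commute)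
    then have "u * a mod int p = 1 mod int p"
      by (metis mod_mult_self1)
    then have ua: "u * a mod int p = 1"
      using p by simp
    define i where "i = nat (u * b mod int p)"
    have "i < p" using p unfolding i_def by (simp add: nat_less_iff)
    have "a * int i mod int p = a * (u * b) mod int p"
      unfolding i_def using p by (simp add: mod_mult_right_eq)
    also have "\<dots> = (u * a) * b mod int p" by (simp add: ac_simps)
    also have "\<dots> = (u * a mod int p) * b mod int p" by (simp add: mod_mult_left_eq)
    also have "\<dots> = b" using ua ab by simp
    finally have "(a, b) \<in> line p (line_dir p i)"
      using ab \<open>i < p\<close> unfolding line_def line_dir_def by (auto intro!: image_eqI[where x = a])
    with \<open>i < p\<close> show ?thesis by (auto intro: less_imp_le)
  qed
qed

lemma card_carrier_Cp2: "0 < p \<Longrightarrow> card (carrier (Cp2 p)) = p ^ 2"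
  by (simp add: carrier_Cp2 power2_eq_square)

lemma subgroup_Cp2_cases:
  assumes prime: "Factorial_Ring.prime p" and H: "subgroup H (Cp2 p)"
  obtains "H = {(0, 0)}" | "H = carrier (Cp2 p)" | i where "i \<le> p" "H = line p (line_dir p i)"
proof -
  interpret comm_group "Cp2 p" by (rule comm_group_Cp2)
  have p: "0 < p" using prime by (rule prime_gt_0_nat)
  have fin: "finite (carrier (Cp2 p))" using p by (simp add: carrier_Cp2)
  have sub: "H \<subseteq> carrier (Cp2 p)" using H by (rule subgroup.subset)
  have "card H dvd p ^ 2"
    using card_subgroup_dvd_card[OF H subgroup_self sub] card_carrier_Cp2[OF p] by simp
  then obtain k where "k \<le> 2" "card H = p ^ k"
    using divides_primepow_nat[OF prime] by blast
  then consider "card H = 1" | "card H = p" | "card H = p ^ 2"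
    by (cases k) (auto simp: le_Suc_eq numeral_2_eq_2)
  then show ?thesis
  proof cases
    case 1
    moreover have "(0, 0) \<in> H" using subgroup.one_closed[OF H] by simp
    ultimately have "H = {(0, 0)}" by (auto simp: card_1_singleton_iff)
    then show ?thesis by (rule that(1))
  next
    case 3
    then have "H = carrier (Cp2 p)"
      using card_subset_eq[OF fin sub] card_carrier_Cp2[OF p] by simp
    then show ?thesis by (rule that(2))
  next
    case 2
    then have "H \<noteq> {(0, 0)}" using prime_gt_1_nat[OF prime] by auto
    then obtain a b where ab: "(a, b) \<in> H" "(a, b) \<noteq> (0, 0)"
      using subgroup.one_closed[OF H] by fastforce
    then obtain i where "i \<le> p" "(a, b) \<in> line p (line_dir p i)"
      using mem_line_dir[OF prime] sub by blast
    then have "H = line p (line_dir p i)"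
      using subgroups_of_prime_card_eq[OF prime H 2 line_subgroup[OF p] card_line_dir[OF p]] ab
      by simp
    with \<open>i \<le> p\<close> show ?thesis by (rule that(3))
  qed
qed

context
  fixes p :: nat
  assumes prime: "Factorial_Ring.prime p"
begin

private lemma p_gt_1: "1 < p"
  using prime by (rule prime_gt_1_nat)

lemma Sub_Cp2: "Sub (Cp2 p) = {{(0, 0)}, carrier (Cp2 p)} \<union> (\<lambda>i. line p (line_dir p i)) ` {0..p}"
proof -
  interpret comm_group "Cp2 p" by (rule comm_group_Cp2)
  have "subgroup {(0, 0)} (Cp2 p)" using triv_subgroup by simp
  moreover have "subgroup (line p (line_dir p i)) (Cp2 p)" for i
    using p_gt_1 by (simp add: line_subgroup)
  ultimately show ?thesis
    unfolding Sub_def using subgroup_self by (auto elim: subgroup_Cp2_cases[OF prime])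
qed

lemma line_Int_line:
  assumes "i \<le> p" "j \<le> p" "i \<noteq> j"
  shows "line p (line_dir p i) \<inter> line p (line_dir p j) = {(0, 0)}"
proof -
  interpret comm_group "Cp2 p" by (rule comm_group_Cp2)
  have p: "0 < p" using p_gt_1 by simp
  have "h = (0, 0)" if "h \<in> line p (line_dir p i)" "h \<in> line p (line_dir p j)" for h
  proof (rule ccontr)
    assume "h \<noteq> (0, 0)"
    then have "line p (line_dir p i) = line p (line_dir p j)"
      using subgroups_of_prime_card_eq[OF prime line_subgroup[OF p] card_line_dir[OF p]
          line_subgroup[OF p] card_line_dir[OF p]] that by simp
    then show False
      using line_dir_in_line_iff[OF p_gt_1] assms by blast
  qed
  moreover have "(0, 0) \<in> line p (line_dir p k)" for k
    using subgroup.one_closed[OF line_subgroup[OF p]] by simp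
  ultimately show ?thesis by blast
qed

lemma diamond_lattice_Sub_Cp2:
  "diamond_lattice (Sub (Cp2 p)) {(0, 0)} (carrier (Cp2 p)) (\<lambda>i. line p (line_dir p i)) p"
proof
  have p: "0 < p" using p_gt_1 by simp
  show "Sub (Cp2 p) = {{(0, 0)}, carrier (Cp2 p)} \<union> (\<lambda>i. line p (line_dir p i)) ` {0..p}"
    by (rule Sub_Cp2)
  show "inj_on (\<lambda>i. line p (line_dir p i)) {0..p}"
    using line_dir_in_line_iff[OF p_gt_1] by (intro inj_onI) (metis atLeastAtMost_iff)
  fix i assume "i \<le> p"
  have sub: "subgroup (line p (line_dir p i)) (Cp2 p)" by (rule line_subgroup[OF p])
  show "{(0, 0)} \<subset> line p (line_dir p i)"
  proof -
    have "line p (line_dir p i) \<noteq> {(0, 0)}"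
      using card_line_dir[OF p, of i] p_gt_1 by auto
    then show ?thesis using subgroup.one_closed[OF sub] by auto
  qed
  show "line p (line_dir p i) \<subset> carrier (Cp2 p)"
    using subgroup.subset[OF sub] card_line_dir[OF p, of i] card_carrier_Cp2[OF p] p_gt_1
    by (auto simp: psubset_eq power2_eq_square)
next
  fix i j assume "i \<le> p" "j \<le> p" "i \<noteq> j"
  then show "line p (line_dir p i) \<inter> line p (line_dir p j) = {(0, 0)}"
    by (rule line_Int_line)
qed

end

theorem theorem5p4:
  fixes p :: nat
  assumes "Factorial_Ring.prime p"
  shows "card (Tr (Cp2 p)) = 2 ^ (p + 2) + p + 1 \<and>
    (\<exists>B M T fB fT \<phi> \<psi>.
       B \<union> M \<union> T = Tr (Cp2 p) \<and> B \<inter> M = {} \<and> B \<inter> T = {} \<and> M \<inter> T = {} \<and>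
       bool_iso p fB B \<and> bool_iso p fT T \<and> card M = p + 1 \<and>
       bij_betw \<phi> M {b. covers_in B b (fB {0..p})} \<and>
       bij_betw \<psi> M {t. covers_in T (fT {}) t} \<and>
       {(x, y). covers_in (Tr (Cp2 p)) x y} =
         {(x, y). covers_in B x y} \<union> {(x, y). covers_in T x y}
         \<union> {(\<phi> m, m) | m. m \<in> M} \<union> {(m, \<psi> m) | m. m \<in> M}
         \<union> {(fB {0..p}, fT {})})"
proof -
  interpret diamond_lattice "Sub (Cp2 p)" "{(0, 0)}" "carrier (Cp2 p)" "\<lambda>i. line p (line_dir p i)" p
    using assms by (rule diamond_lattice_Sub_Cp2)
  have Tr: "Tr (Cp2 p) = {R. transfer_system (Sub (Cp2 p)) R}"
    by (simp add: Tr_def comm_group.G_transfer_system_iff[OF comm_group_Cp2])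
  show ?thesis
    unfolding Tr
    by (intro conjI exI card_transfer_systems)
      (rule transfer_systems_eq[symmetric] blocks_disjoint bool_iso_lower_system
        bool_iso_upper_system card_blocks(2)
        bij_betw_Int_lower bij_betw_Un_upper covers_transfer_systems_eq)+
qed

end
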